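(* Consider the $Q\times2$ coin problem below with $Q\ge12$, $C_1=40$, $C_2=64$ and budget $H>0$. If $\epsilon=\frac1{20}\sqrt{\frac{Q\delta}{H}}$, then for any algorithm $\mathrm{Alg}$, if $N_1\le\frac{Q}{4C_1\lambda^2}$, there exists a set $J\subseteq[Q]$ with $|J|\ge\frac Q6$ such that $\mathbb P_j[\hat\theta=j]\le\frac12$ for all $j\in J$.
   Context: Coin problem: constants $\delta,\lambda,\epsilon\in(0,\frac14]$ and $2Q$ coins arranged in a $Q\times2$ table (rows $1,\dots,Q$, columns $1,2$), one coin per cell. There is an unknown special row $\theta\in[Q]$. In column 1 all coins are fair except the coin in row $\theta$, whose probability of heads is $\frac12+\lambda$. In column 2 all coins have probability of heads $\delta$ except the coin in row $\theta$, with probability of heads $\delta+\epsilon$. An algorithm sequentially chooses coins to flip, each choice possibly depending on previous outcomes, performs a (possibly data-dependent) total of $\tau=N_1+N_2\le H$ flips for the fixed budget $H$, where $N_1,N_2$ are the numbers of flips in column 1 and column 2, and then outputs $\hat\theta\in[Q]$. For $j\in[Q]$, $\mathbb P_j$ is the probability measure induced by the algorithm and coins when $\theta=j$. *)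

theory Defs
  imports "HOL-Probability.Probability"
begin

text \<open>Rows are 1..Q, columns are 1 and 2. A history is the list of
  performed flips (row, column, outcome).\<close>

datatype action = Flip nat nat | Output nat

type_synonym history = "(nat \<times> nat \<times> bool) list"
type_synonym algorithm = "history \<Rightarrow> action pmf"

definition coin_prob :: "real \<Rightarrow> real \<Rightarrow> real \<Rightarrow> nat \<Rightarrow> nat \<Rightarrow> nat \<Rightarrow> real" where
  "coin_prob \<delta> lam \<epsilon> th r c =
     (if c = 1 then (if r = th then 1/2 + lam else 1/2)
      else (if r = th then \<delta> + \<epsilon> else \<delta>))"

fun run :: "real \<Rightarrow> real \<Rightarrow> real \<Rightarrow> nat \<Rightarrow> algorithm \<Rightarrow> nat \<Rightarrow> history \<Rightarrow> (history \<times> nat) pmf" where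
  "run \<delta> lam \<epsilon> th alg 0 h =
     map_pmf (\<lambda>a. case a of Output t \<Rightarrow> (h, t) | Flip r c \<Rightarrow> (h, 0)) (alg h)"
| "run \<delta> lam \<epsilon> th alg (Suc k) h =
     alg h \<bind> (\<lambda>a. case a of
        Output t \<Rightarrow> return_pmf (h, t)
      | Flip r c \<Rightarrow> bernoulli_pmf (coin_prob \<delta> lam \<epsilon> th r c) \<bind>
                      (\<lambda>b. run \<delta> lam \<epsilon> th alg k (h @ [(r, c, b)])))"

definition valid_alg :: "nat \<Rightarrow> nat \<Rightarrow> algorithm \<Rightarrow> bool" where
  "valid_alg Q H alg \<longleftrightarrow>
     (\<forall>h a. a \<in> set_pmf (alg h) \<longrightarrow>
        (case a of Flip r c \<Rightarrow> r \<in> {1..Q} \<and> c \<in> {1, 2} \<and> length h < H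
                 | Output t \<Rightarrow> t \<in> {1..Q}))"

definition outcome :: "real \<Rightarrow> real \<Rightarrow> real \<Rightarrow> nat \<Rightarrow> algorithm \<Rightarrow> nat \<Rightarrow> (history \<times> nat) pmf" where
  "outcome \<delta> lam \<epsilon> H alg j = run \<delta> lam \<epsilon> j alg H []"

definition N1 :: "history \<Rightarrow> nat" where
  "N1 h = length (filter (\<lambda>(r, c, b). c = 1) h)"

end

theory Submission
  imports Defs
begin

(* Compare every instance theta = j with the reference instance theta = 0, in which no row is
   special (rows are numbered from 1). For a [0,1]-valued statistic g of the final history and
   output, the binary divergence between the expectations of g under theta = 0 and theta = j is
   at most the expected divergence collected, under theta = 0, by the flips of row j: by induction
   on the remaining budget, using joint convexity for the algorithm's (randomised) choice of
   action and the chain rule for each coin flip. Summed over j this costs at most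
   kl(1/2, 1/2 + lam) * N_1 + kl(delta, delta + eps) * H <= 23Q/600, by the chi-square bound.
   With g the indicator of the output j, the numbers x_j = P_0[output = j] sum to at most 1, so
   at most four exceed 1/4, and every other j with P_j[output = j] > 1/2 carries divergence at
   least 11/108; hence fewer than 5Q/6 rows are identified with probability above 1/2. *)

definition rel_entr :: "real \<Rightarrow> real \<Rightarrow> real" where
  "rel_entr a b = a * ln (a / b)"

definition bernoulli_kl :: "real \<Rightarrow> real \<Rightarrow> real" where
  "bernoulli_kl p q = rel_entr p q + rel_entr (1 - p) (1 - q)"

(* Only under this condition is bernoulli_kl p q the divergence of Bernoulli(p) from Bernoulli(q):
   otherwise ln 0 = 0 and x / 0 = 0 turn an infinite divergence into a finite junk value. *)
definition bernoulli_abs_cont :: "real \<Rightarrow> real \<Rightarrow> bool" where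
  "bernoulli_abs_cont p q \<longleftrightarrow> p \<in> {0..1} \<and> q \<in> {0..1} \<and> (0 < p \<longrightarrow> 0 < q) \<and> (p < 1 \<longrightarrow> q < 1)"

lemma rel_entr_0_left [simp]: "rel_entr 0 b = 0"
  by (simp add: rel_entr_def)

lemma rel_entr_self [simp]: "rel_entr a a = 0"
  by (cases "a = 0") (simp_all add: rel_entr_def)

lemma bernoulli_kl_self [simp]: "bernoulli_kl p p = 0"
  by (simp add: bernoulli_kl_def)

lemma rel_entr_ge_tangent:
  assumes "0 \<le> a" "0 \<le> b" "0 < a \<Longrightarrow> 0 < b" "0 < t"
  shows "a * ln t + a - b * t \<le> rel_entr a b"
proof (cases "a = 0")
  case True
  then show ?thesis using assms by simp
next
  case False
  then have a: "0 < a" and b: "0 < b" using assms by auto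
  have "ln (b * t / a) \<le> b * t / a - 1"
    using a b assms(4) by (intro ln_le_minus_one) simp
  then have "a * (1 - b * t / a) \<le> a * ln (a / (b * t))"
    using a b assms(4) by (simp add: ln_div)
  also have "ln (a / (b * t)) = ln (a / b) - ln t"
    using a b assms(4) by (simp add: ln_div ln_mult)
  finally show ?thesis
    using a by (simp add: rel_entr_def algebra_simps)
qed

lemma rel_entr_le: "0 \<le> a \<Longrightarrow> 0 < b \<Longrightarrow> rel_entr a b \<le> a * a / b - a"
proof (cases "a = 0")
  case False
  assume "0 \<le> a" "0 < b"
  then have "a * ln (a / b) \<le> a * (a / b - 1)"
    using False by (intro mult_left_mono ln_le_minus_one) auto
  then show ?thesis by (simp add: rel_entr_def algebra_simps)
qed simp

lemma rel_entr_mult: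
  assumes "0 \<le> w" "0 \<le> x" "0 < w \<Longrightarrow> 0 < v" "0 < x \<Longrightarrow> 0 < y"
  shows "rel_entr (w * x) (v * y) = x * rel_entr w v + w * rel_entr x y"
proof (cases "w = 0 \<or> x = 0")
  case False
  then have "0 < w" "0 < v" "0 < x" "0 < y" using assms by auto
  then have "ln ((w * x) / (v * y)) = ln (w / v) + ln (x / y)"
    by (simp add: ln_div ln_mult)
  then show ?thesis by (simp add: rel_entr_def algebra_simps)
qed auto

lemma rel_entr_sum_le:
  assumes "finite S" and nonneg: "\<And>i. i \<in> S \<Longrightarrow> 0 \<le> a i \<and> 0 \<le> b i \<and> (0 < a i \<longrightarrow> 0 < b i)"
  shows "rel_entr (\<Sum>i\<in>S. a i) (\<Sum>i\<in>S. b i) \<le> (\<Sum>i\<in>S. rel_entr (a i) (b i))"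
proof (cases "(\<Sum>i\<in>S. a i) = 0")
  case True
  then have "\<forall>i\<in>S. a i = 0" using assms by (subst (asm) sum_nonneg_eq_0_iff) auto
  then show ?thesis using True by simp
next
  case False
  define A where "A = (\<Sum>i\<in>S. a i)"
  define B where "B = (\<Sum>i\<in>S. b i)"
  obtain i where "i \<in> S" "a i \<noteq> 0" using False by (meson sum.neutral)
  then have "0 < b i" using nonneg by force
  moreover have "b i \<le> B"
    unfolding B_def using nonneg \<open>i \<in> S\<close> \<open>finite S\<close> by (intro member_le_sum) auto
  ultimately have "0 < B" by linarith
  have "0 < A" using False nonneg by (simp add: A_def order_le_neq_trans sum_nonneg)
  have "rel_entr A B = (\<Sum>i\<in>S. a i * ln (A / B) + a i - b i * (A / B))"
    using \<open>0 < B\<close> by (simp add: rel_entr_def sum.distrib sum_subtractf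
        flip: sum_distrib_right sum_divide_distrib A_def B_def)
  also have "\<dots> \<le> (\<Sum>i\<in>S. rel_entr (a i) (b i))"
    using nonneg \<open>0 < A\<close> \<open>0 < B\<close> by (intro sum_mono rel_entr_ge_tangent) auto
  finally show ?thesis by (simp add: A_def B_def)
qed

lemma bernoulli_kl_nonneg: "bernoulli_abs_cont p q \<Longrightarrow> 0 \<le> bernoulli_kl p q"
  using rel_entr_ge_tangent[of p q 1] rel_entr_ge_tangent[of "1 - p" "1 - q" 1]
  by (simp add: bernoulli_kl_def bernoulli_abs_cont_def)

lemma bernoulli_kl_le_chi2:
  assumes "0 \<le> p" "p \<le> 1" "0 < q" "q < 1"
  shows "bernoulli_kl p q \<le> (p - q)\<^sup>2 / (q * (1 - q))"
proof -
  have "bernoulli_kl p q \<le> (p * p / q - p) + ((1 - p) * (1 - p) / (1 - q) - (1 - p))"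
    using rel_entr_le[of p q] rel_entr_le[of "1 - p" "1 - q"] assms
    by (simp add: bernoulli_kl_def)
  also have "\<dots> = (p - q)\<^sup>2 / (q * (1 - q))"
    using assms by (simp add: field_simps power2_eq_square)
  finally show ?thesis .
qed

lemma bernoulli_kl_ge_11_108:
  assumes "0 \<le> p" "p \<le> 1/4" "1/2 \<le> q" "q < 1"
  shows "11/108 \<le> bernoulli_kl p q"
proof -
  \<comment> \<open>tangent bounds at t = 1/2 and t = 3/2, the optimal choice at the corner (1/4, 1/2)\<close>
  have "p * ln (1/2) + (1 - p) * ln (3/2) + (q - 1/2)
      = (p * ln (1/2) + p - q * (1/2)) + ((1 - p) * ln (3/2) + (1 - p) - (1 - q) * (3/2))"
    by (simp add: field_simps)
  also have "\<dots> \<le> bernoulli_kl p q"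
    unfolding bernoulli_kl_def using assms by (intro add_mono rel_entr_ge_tangent) auto
  finally have "p * ln (1/2) + (1 - p) * ln (3/2) + (q - 1/2) \<le> bernoulli_kl p q" .
  moreover have "ln (3/2) - ln 3 / 4 \<le> p * ln (1/2) + (1 - p) * ln (3/2) + (q - 1/2)"
  proof -
    have "p * ln (1/2) = p * ln (3/2) - p * ln (3::real)"
      by (simp add: ln_div right_diff_distrib)
    moreover have "p * ln 3 \<le> ln 3 / (4::real)"
      using assms mult_right_mono[of p "1/4" "ln 3"] by simp
    moreover have "(1 - p) * ln (3/2) = ln (3/2) - p * ln (3/2::real)"
      by (simp add: left_diff_distrib)
    ultimately show ?thesis using assms by linarith
  qed
  moreover have "11/108 \<le> ln (3/2) - ln 3 / (4::real)"
  proof -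
    have "1 - 1 / (27/16) \<le> ln (27/16::real)"
      using ln_le_minus_one[of "16/27"] by (simp add: ln_div)
    moreover have "ln (27/16::real) = ln ((3/2) ^ 4) - ln 3"
      by (subst ln_divide_pos[symmetric]) (simp_all add: power4_eq_xxxx)
    ultimately show ?thesis by (simp add: ln_realpow)
  qed
  ultimately show ?thesis by linarith
qed

lemma bernoulli_kl_mixture_le:
  assumes "finite S" "sum w S = 1" "sum v S = 1"
    and weights: "\<And>i. i \<in> S \<Longrightarrow> 0 \<le> w i \<and> 0 \<le> v i \<and> (0 < w i \<longrightarrow> 0 < v i)"
    and ac: "\<And>i. i \<in> S \<Longrightarrow> bernoulli_abs_cont (x i) (y i)"
  shows "bernoulli_kl (\<Sum>i\<in>S. w i * x i) (\<Sum>i\<in>S. v i * y i)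
    \<le> (\<Sum>i\<in>S. rel_entr (w i) (v i)) + (\<Sum>i\<in>S. w i * bernoulli_kl (x i) (y i))"
proof -
  have compl: "1 - (\<Sum>i\<in>S. u i * z i) = (\<Sum>i\<in>S. u i * (1 - z i))" if "sum u S = 1" for u z :: "_ \<Rightarrow> real"
    using that by (simp add: sum_subtractf right_diff_distrib)
  have "bernoulli_kl (\<Sum>i\<in>S. w i * x i) (\<Sum>i\<in>S. v i * y i)
      = rel_entr (\<Sum>i\<in>S. w i * x i) (\<Sum>i\<in>S. v i * y i)
        + rel_entr (\<Sum>i\<in>S. w i * (1 - x i)) (\<Sum>i\<in>S. v i * (1 - y i))"
    by (simp add: bernoulli_kl_def compl assms)
  also have "\<dots> \<le> (\<Sum>i\<in>S. rel_entr (w i * x i) (v i * y i))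
        + (\<Sum>i\<in>S. rel_entr (w i * (1 - x i)) (v i * (1 - y i)))"
    using weights ac unfolding bernoulli_abs_cont_def
    by (intro add_mono rel_entr_sum_le \<open>finite S\<close>) (fastforce simp: zero_less_mult_iff)+
  also have "\<dots> = (\<Sum>i\<in>S. rel_entr (w i) (v i) + w i * bernoulli_kl (x i) (y i))"
    unfolding sum.distrib[symmetric]
  proof (intro sum.cong refl)
    fix i assume "i \<in> S"
    then have "rel_entr (w i * x i) (v i * y i) = x i * rel_entr (w i) (v i) + w i * rel_entr (x i) (y i)"
      "rel_entr (w i * (1 - x i)) (v i * (1 - y i))
        = (1 - x i) * rel_entr (w i) (v i) + w i * rel_entr (1 - x i) (1 - y i)"
      using weights ac by (auto intro!: rel_entr_mult simp: bernoulli_abs_cont_def)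
    then show "rel_entr (w i * x i) (v i * y i) + rel_entr (w i * (1 - x i)) (v i * (1 - y i))
        = rel_entr (w i) (v i) + w i * bernoulli_kl (x i) (y i)"
      by (simp add: bernoulli_kl_def algebra_simps)
  qed
  finally show ?thesis by (simp add: sum.distrib)
qed

lemma bernoulli_kl_mixture2_le:
  assumes "bernoulli_abs_cont p q" "bernoulli_abs_cont x1 y1" "bernoulli_abs_cont x0 y0"
  shows "bernoulli_kl (p * x1 + (1 - p) * x0) (q * y1 + (1 - q) * y0)
    \<le> bernoulli_kl p q + p * bernoulli_kl x1 y1 + (1 - p) * bernoulli_kl x0 y0"
proof -
  have "bernoulli_kl (\<Sum>b\<in>UNIV. (if b then p else 1 - p) * (if b then x1 else x0))
      (\<Sum>b\<in>UNIV. (if b then q else 1 - q) * (if b then y1 else y0))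
    \<le> (\<Sum>b\<in>UNIV. rel_entr (if b then p else 1 - p) (if b then q else 1 - q))
      + (\<Sum>b\<in>UNIV. (if b then p else 1 - p) * bernoulli_kl (if b then x1 else x0) (if b then y1 else y0))"
    using assms by (intro bernoulli_kl_mixture_le) (auto simp: UNIV_bool bernoulli_abs_cont_def)
  then show ?thesis by (simp add: UNIV_bool bernoulli_kl_def ac_simps)
qed

lemma bernoulli_kl_expectation_le:
  fixes x y :: "'a \<Rightarrow> real"
  assumes "finite (set_pmf M)" "\<And>a. a \<in> set_pmf M \<Longrightarrow> bernoulli_abs_cont (x a) (y a)"
  shows "bernoulli_kl (measure_pmf.expectation M x) (measure_pmf.expectation M y)
    \<le> measure_pmf.expectation M (\<lambda>a. bernoulli_kl (x a) (y a))"
  using bernoulli_kl_mixture_le[of "set_pmf M" "pmf M" "pmf M" x y] assms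
  by (simp add: integral_measure_pmf_real[of "set_pmf M"] sum_pmf_eq_1 mult.commute)

lemma bernoulli_abs_cont_expectation:
  fixes g :: "'a \<Rightarrow> real"
  assumes "set_pmf M = set_pmf N" and g: "\<And>z. 0 \<le> g z \<and> g z \<le> 1"
  shows "bernoulli_abs_cont (measure_pmf.expectation M g) (measure_pmf.expectation N g)"
proof -
  have int: "integrable (measure_pmf L) f" if "\<And>z. 0 \<le> f z \<and> f z \<le> 1" for L and f :: "'a \<Rightarrow> real"
    using that by (intro measure_pmf.integrable_const_bound[where B=1]) auto
  have pos: "0 < measure_pmf.expectation L f \<longleftrightarrow> (\<exists>z\<in>set_pmf L. 0 < f z)"
    if f: "\<And>z. 0 \<le> f z \<and> f z \<le> 1" for L and f :: "'a \<Rightarrow> real"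
  proof -
    have "measure_pmf.expectation L f = 0 \<longleftrightarrow> (\<forall>z\<in>set_pmf L. f z = 0)"
      using integral_nonneg_eq_0_iff_AE[OF int[OF f]] f by (simp add: AE_measure_pmf_iff)
    moreover have "0 \<le> measure_pmf.expectation L f"
      using f by simp
    ultimately show ?thesis
      using f by (metis order_less_le)
  qed
  have le1: "measure_pmf.expectation L g \<le> 1" for L
    using g by (intro measure_pmf.integral_le_const int) auto
  have compl: "measure_pmf.expectation L (\<lambda>z. 1 - g z) = 1 - measure_pmf.expectation L g" for L
    using int[OF g] by simp
  have "0 \<le> measure_pmf.expectation L g" for L
    using g by simp
  then show ?thesis
    using pos[of g M] pos[of g N] pos[of "\<lambda>z. 1 - g z" M] pos[of "\<lambda>z. 1 - g z" N]
      compl le1 g assms(1)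
    unfolding bernoulli_abs_cont_def by auto
qed

lemma integral_bind_pmf:
  fixes f :: "'b \<Rightarrow> real"
  assumes "bounded (f ` set_pmf (bind_pmf M N))"
  shows "measure_pmf.expectation (bind_pmf M N) f
    = measure_pmf.expectation M (\<lambda>x. measure_pmf.expectation (N x) f)"
proof -
  let ?S = "set_pmf (bind_pmf M N)"
  obtain B where B: "\<And>y. y \<in> ?S \<Longrightarrow> \<bar>f y\<bar> \<le> B"
    using assms by (auto simp: bounded_real)
  have "0 \<le> B"
    using B set_pmf_not_empty[of "bind_pmf M N"] by (auto intro: order_trans[OF abs_ge_zero])
  define f' where "f' y = (if y \<in> ?S then f y else 0)" for y
  have "measure_pmf.expectation (bind_pmf M N) f = measure_pmf.expectation (bind_pmf M N) f'"
    by (intro integral_cong_AE) (auto simp: AE_measure_pmf_iff f'_def)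
  also have "\<dots> = measure_pmf.expectation M (\<lambda>x. measure_pmf.expectation (N x) f')"
    unfolding measure_pmf_bind
    using measurable_measure_pmf[of N] B \<open>0 \<le> B\<close>
    by (intro integral_bind[where K = "count_space UNIV" and B = B and B' = 1])
      (auto simp: f'_def measurable_cong_sets[OF sets_measure_pmf_count_space refl]
        measure_pmf.emeasure_space_1)
  also have "\<dots> = measure_pmf.expectation M (\<lambda>x. measure_pmf.expectation (N x) f)"
    by (intro integral_cong_AE) (auto simp: AE_measure_pmf_iff f'_def intro!: integral_cong_AE)
  finally show ?thesis .
qed

lemma card_le_half_lower_bound:
  fixes x y :: "'a \<Rightarrow> real"
  assumes "finite S" "(\<Sum>j\<in>S. x j) \<le> 1"
    and ac: "\<And>j. j \<in> S \<Longrightarrow> bernoulli_abs_cont (x j) (y j)"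
    and "(\<Sum>j\<in>S. bernoulli_kl (x j) (y j)) \<le> K"
  shows "real (card S) - 4 - 108/11 * K \<le> real (card {j\<in>S. y j \<le> 1/2})"
proof -
  \<comment> \<open>an index with y j > 1/2 has either x j \<ge> 1/4 (at most four such) or divergence \<ge> 11/108\<close>
  define A where "A = {j\<in>S. y j \<le> 1/2}"
  define B1 where "B1 = {j\<in>S. 1/2 < y j \<and> 1/4 \<le> x j}"
  define B2 where "B2 = {j\<in>S. 1/2 < y j \<and> x j < 1/4}"
  have "S = A \<union> B1 \<union> B2"
    by (auto simp: A_def B1_def B2_def)
  then have "card S \<le> card A + card B1 + card B2"
    using card_Un_le[of "A \<union> B1" B2] card_Un_le[of A B1] by simp
  moreover have "real (card B1) * (1/4) \<le> 1"
  proof -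
    have "real (card B1) * (1/4) = (\<Sum>j\<in>B1. 1/4)" by simp
    also have "\<dots> \<le> (\<Sum>j\<in>B1. x j)" by (intro sum_mono) (simp add: B1_def)
    also have "\<dots> \<le> (\<Sum>j\<in>S. x j)"
      using ac \<open>finite S\<close> by (intro sum_mono2) (auto simp: B1_def bernoulli_abs_cont_def)
    finally show ?thesis using assms(2) by linarith
  qed
  moreover have "real (card B2) * (11/108) \<le> K"
  proof -
    have "real (card B2) * (11/108) = (\<Sum>j\<in>B2. 11/108)" by simp
    also have "\<dots> \<le> (\<Sum>j\<in>B2. bernoulli_kl (x j) (y j))"
      using ac by (intro sum_mono bernoulli_kl_ge_11_108) (auto simp: B2_def bernoulli_abs_cont_def)
    also have "\<dots> \<le> (\<Sum>j\<in>S. bernoulli_kl (x j) (y j))"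
      using ac \<open>finite S\<close> by (intro sum_mono2 bernoulli_kl_nonneg) (auto simp: B2_def)
    finally show ?thesis using assms(4) by linarith
  qed
  ultimately show ?thesis unfolding A_def by linarith
qed

locale coin_problem =
  fixes \<delta> lam \<epsilon> :: real and Q H :: nat and alg :: algorithm
  assumes \<delta>: "0 < \<delta>" "\<delta> \<le> 1/4" and lam: "0 < lam" "lam \<le> 1/4" and \<epsilon>: "0 < \<epsilon>" "\<epsilon> \<le> 1/4"
    and valid: "valid_alg Q H alg"
begin

abbreviation heads :: "nat \<Rightarrow> nat \<Rightarrow> nat \<Rightarrow> real" where
  "heads th r c \<equiv> coin_prob \<delta> lam \<epsilon> th r c"

abbreviation P :: "nat \<Rightarrow> nat \<Rightarrow> history \<Rightarrow> (history \<times> nat) pmf" where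
  "P th k h \<equiv> run \<delta> lam \<epsilon> th alg k h"

definition continuation :: "nat \<Rightarrow> nat \<Rightarrow> history \<Rightarrow> action \<Rightarrow> (history \<times> nat) pmf" where
  "continuation th k h a = (case a of
      Output t \<Rightarrow> return_pmf (h, t)
    | Flip r c \<Rightarrow> bernoulli_pmf (heads th r c) \<bind> (\<lambda>b. P th k (h @ [(r, c, b)])))"

lemma run_Suc_continuation: "P th (Suc k) h = alg h \<bind> continuation th k h"
  by (simp add: continuation_def[abs_def])

lemma heads_bounds: "0 < heads th r c" "heads th r c < 1"
  using \<delta> lam \<epsilon> by (auto simp: coin_prob_def)

lemma bernoulli_abs_cont_heads: "bernoulli_abs_cont (heads th r c) (heads th' r' c')"
  using heads_bounds by (simp add: bernoulli_abs_cont_def less_imp_le)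

lemma valid_action:
  "a \<in> set_pmf (alg h) \<Longrightarrow>
    (case a of Flip r c \<Rightarrow> r \<in> {1..Q} \<and> c \<in> {1, 2} \<and> length h < H | Output t \<Rightarrow> t \<in> {1..Q})"
  using valid unfolding valid_alg_def by blast

lemma finite_set_alg: "finite (set_pmf (alg h))"
proof (rule finite_subset)
  show "set_pmf (alg h) \<subseteq> case_prod Flip ` ({1..Q} \<times> {1, 2}) \<union> Output ` {1..Q}"
    using valid_action by (fastforce split: action.splits)
qed auto

lemma finite_set_run: "finite (set_pmf (P th k h))"
proof (induction k arbitrary: h)
  case 0
  show ?case using finite_set_alg by simp
next
  case (Suc k)
  have "finite (set_pmf (continuation th k h a))" for a
    using Suc.IH by (cases a) (auto simp: continuation_def)
  then show ?case using finite_set_alg by (simp add: run_Suc_continuation del: run.simps)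
qed

lemma set_run_eq: "set_pmf (P th k h) = set_pmf (P th' k h)"
proof (induction k arbitrary: h)
  case (Suc k)
  have "set_pmf (continuation th k h a) = set_pmf (continuation th' k h a)" for a
    using Suc.IH heads_bounds by (cases a) (simp_all add: continuation_def)
  then show ?case by (simp add: run_Suc_continuation del: run.simps)
qed simp

lemma set_continuation_eq: "set_pmf (continuation th k h a) = set_pmf (continuation th' k h a)"
  using set_run_eq[of th k _ th'] heads_bounds by (cases a) (simp_all add: continuation_def)

lemma length_run_le: "z \<in> set_pmf (P th k h) \<Longrightarrow> length (fst z) \<le> length h + k"
proof (induction k arbitrary: h)
  case 0
  then show ?case by (auto split: action.splits)
next
  case (Suc k)
  then obtain a where "a \<in> set_pmf (alg h)" "z \<in> set_pmf (continuation th k h a)"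
    by (auto simp: run_Suc_continuation simp del: run.simps)
  then show ?case
    using Suc.IH by (cases a) (fastforce simp: continuation_def)+
qed

lemma expectation_run_Suc:
  fixes f :: "history \<times> nat \<Rightarrow> real"
  shows "measure_pmf.expectation (P th (Suc k) h) f
    = measure_pmf.expectation (alg h) (\<lambda>a. measure_pmf.expectation (continuation th k h a) f)"
  using finite_set_run[of th "Suc k" h] unfolding run_Suc_continuation
  by (intro integral_bind_pmf finite_imp_bounded) simp

lemma expectation_continuation_Output [simp]:
  fixes f :: "history \<times> nat \<Rightarrow> real"
  shows "measure_pmf.expectation (continuation th k h (Output t)) f = f (h, t)"
  by (simp add: continuation_def)

lemma expectation_continuation_Flip:
  fixes f :: "history \<times> nat \<Rightarrow> real"
  shows "measure_pmf.expectation (continuation th k h (Flip r c)) f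
    = heads th r c * measure_pmf.expectation (P th k (h @ [(r, c, True)])) f
      + (1 - heads th r c) * measure_pmf.expectation (P th k (h @ [(r, c, False)])) f"
proof -
  have "finite (set_pmf (continuation th k h (Flip r c)))"
    using finite_set_run by (auto simp: continuation_def)
  then show ?thesis
    unfolding continuation_def using heads_bounds[of th r c]
    by (simp add: integral_bind_pmf finite_imp_bounded less_imp_le mult.commute)
qed

definition flip_kl :: "nat \<Rightarrow> real" where
  "flip_kl c = bernoulli_kl (heads 0 1 c) (heads 1 1 c)"

definition history_kl :: "nat \<Rightarrow> history \<Rightarrow> real" where
  "history_kl j h = (\<Sum>(r, c, b)\<leftarrow>h. if r = j then flip_kl c else 0)"

lemma history_kl_snoc:
  "history_kl j (h @ [(r, c, b)]) = history_kl j h + (if r = j then flip_kl c else 0)"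
  by (simp add: history_kl_def)

lemma bernoulli_kl_heads:
  "r \<noteq> 0 \<Longrightarrow> j \<noteq> 0 \<Longrightarrow> bernoulli_kl (heads 0 r c) (heads j r c) = (if r = j then flip_kl c else 0)"
  by (auto simp: flip_kl_def coin_prob_def)

lemma bernoulli_kl_run_le:
  fixes g :: "history \<times> nat \<Rightarrow> real"
  assumes "j \<noteq> 0" and g: "\<And>z. 0 \<le> g z \<and> g z \<le> 1"
  shows "bernoulli_kl (measure_pmf.expectation (P 0 k h) g) (measure_pmf.expectation (P j k h) g)
    \<le> measure_pmf.expectation (P 0 k h) (\<lambda>z. history_kl j (fst z)) - history_kl j h"
proof (induction k arbitrary: h)
  case 0
  have "fst (case a of Output t \<Rightarrow> (h, t) | Flip r c \<Rightarrow> (h, 0)) = h" for a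
    by (cases a) auto
  then show ?case by simp
next
  case (Suc k)
  let ?X = "\<lambda>th a. measure_pmf.expectation (continuation th k h a) g"
  let ?C = "\<lambda>a. measure_pmf.expectation (continuation 0 k h a) (\<lambda>z. history_kl j (fst z))"
  have step: "bernoulli_kl (?X 0 a) (?X j a) \<le> ?C a - history_kl j h" if "a \<in> set_pmf (alg h)" for a
  proof (cases a)
    case (Flip r c)
    then have "r \<noteq> 0" using valid_action[OF that] by auto
    let ?p = "heads 0 r c"
    let ?E = "\<lambda>th b f. measure_pmf.expectation (P th k (h @ [(r, c, b)])) f"
    let ?kl = "\<lambda>b. bernoulli_kl (?E 0 b g) (?E j b g)"
    let ?c = "\<lambda>b. ?E 0 b (\<lambda>z. history_kl j (fst z)) - history_kl j (h @ [(r, c, b)])"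
    have "bernoulli_kl (?X 0 a) (?X j a)
        \<le> bernoulli_kl ?p (heads j r c) + ?p * ?kl True + (1 - ?p) * ?kl False"
      unfolding Flip expectation_continuation_Flip
      by (intro bernoulli_kl_mixture2_le bernoulli_abs_cont_heads bernoulli_abs_cont_expectation
          set_run_eq g)
    also have "\<dots> \<le> bernoulli_kl ?p (heads j r c) + ?p * ?c True + (1 - ?p) * ?c False"
      using Suc.IH heads_bounds[of 0 r c] by (intro add_mono mult_left_mono) auto
    also have "\<dots> = ?C a - history_kl j h"
      unfolding Flip expectation_continuation_Flip history_kl_snoc
      using bernoulli_kl_heads[OF \<open>r \<noteq> 0\<close> \<open>j \<noteq> 0\<close>] by (simp add: algebra_simps)
    finally show ?thesis .
  qed simp
  have "bernoulli_kl (measure_pmf.expectation (P 0 (Suc k) h) g) (measure_pmf.expectation (P j (Suc k) h) g)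
      \<le> measure_pmf.expectation (alg h) (\<lambda>a. bernoulli_kl (?X 0 a) (?X j a))"
    unfolding expectation_run_Suc
    by (intro bernoulli_kl_expectation_le finite_set_alg bernoulli_abs_cont_expectation
        set_continuation_eq g)
  also have "\<dots> \<le> measure_pmf.expectation (alg h) (\<lambda>a. ?C a - history_kl j h)"
    using step finite_set_alg
    by (intro integral_mono_AE) (auto simp: integrable_measure_pmf_finite AE_measure_pmf_iff)
  also have "\<dots> = measure_pmf.expectation (P 0 (Suc k) h) (\<lambda>z. history_kl j (fst z)) - history_kl j h"
    unfolding expectation_run_Suc by (simp add: integrable_measure_pmf_finite[OF finite_set_alg])
  finally show ?case .
qed

lemma bernoulli_abs_cont_prob_run:
  "bernoulli_abs_cont (measure_pmf.prob (P th k h) A) (measure_pmf.prob (P th' k h) A)"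
  using bernoulli_abs_cont_expectation[OF set_run_eq, of "indicator A"] by simp

lemma bernoulli_kl_prob_run_le:
  "j \<noteq> 0 \<Longrightarrow> bernoulli_kl (measure_pmf.prob (P 0 k []) A) (measure_pmf.prob (P j k []) A)
    \<le> measure_pmf.expectation (P 0 k []) (\<lambda>z. history_kl j (fst z))"
  using bernoulli_kl_run_le[of j "indicator A" k "[]"] by (simp add: history_kl_def)

lemma flip_kl_nonneg: "0 \<le> flip_kl c"
  unfolding flip_kl_def by (intro bernoulli_kl_nonneg bernoulli_abs_cont_heads)

lemma sum_history_kl_le:
  "(\<Sum>j\<in>{1..Q}. history_kl j h) \<le> flip_kl 1 * real (N1 h) + flip_kl 2 * real (length h)"
proof (induction h)
  case Nil
  then show ?case by (simp add: history_kl_def N1_def)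
next
  case (Cons f h)
  obtain r c b where f: "f = (r, c, b)" by (cases f)
  have "(\<Sum>j\<in>{1..Q}. if r = j then flip_kl c else 0) \<le> flip_kl 1 * (if c = 1 then 1 else 0) + flip_kl 2"
    using flip_kl_nonneg[of 1] flip_kl_nonneg[of 2] by (auto simp: flip_kl_def coin_prob_def)
  moreover have "(\<Sum>j\<in>{1..Q}. history_kl j (f # h))
      = (\<Sum>j\<in>{1..Q}. if r = j then flip_kl c else 0) + (\<Sum>j\<in>{1..Q}. history_kl j h)"
    by (simp add: history_kl_def f sum.distrib)
  moreover have "real (N1 (f # h)) = (if c = 1 then 1 else 0) + real (N1 h)"
    by (simp add: N1_def f)
  ultimately show ?case
    using Cons.IH by (simp add: distrib_left)
qed

lemma expected_history_kl_le:
  assumes "\<And>z. z \<in> set_pmf (P 0 H []) \<Longrightarrow> real (N1 (fst z)) \<le> B"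
  shows "(\<Sum>j\<in>{1..Q}. measure_pmf.expectation (P 0 H []) (\<lambda>z. history_kl j (fst z)))
    \<le> flip_kl 1 * B + flip_kl 2 * H"
proof -
  have "(\<Sum>j\<in>{1..Q}. measure_pmf.expectation (P 0 H []) (\<lambda>z. history_kl j (fst z)))
      = measure_pmf.expectation (P 0 H []) (\<lambda>z. \<Sum>j\<in>{1..Q}. history_kl j (fst z))"
    by (simp add: integrable_measure_pmf_finite[OF finite_set_run])
  also have "\<dots> \<le> measure_pmf.expectation (P 0 H []) (\<lambda>z. flip_kl 1 * B + flip_kl 2 * H)"
  proof (intro integral_mono_AE)
    show "AE z in P 0 H []. (\<Sum>j\<in>{1..Q}. history_kl j (fst z)) \<le> flip_kl 1 * B + flip_kl 2 * H"
      unfolding AE_measure_pmf_iff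
    proof
      fix z assume z: "z \<in> set_pmf (P 0 H [])"
      have "(\<Sum>j\<in>{1..Q}. history_kl j (fst z))
          \<le> flip_kl 1 * real (N1 (fst z)) + flip_kl 2 * real (length (fst z))"
        by (rule sum_history_kl_le)
      also have "\<dots> \<le> flip_kl 1 * B + flip_kl 2 * H"
        using assms[OF z] length_run_le[OF z] flip_kl_nonneg
        by (intro add_mono mult_left_mono) auto
      finally show "(\<Sum>j\<in>{1..Q}. history_kl j (fst z)) \<le> flip_kl 1 * B + flip_kl 2 * H" .
    qed
  qed (simp_all add: integrable_measure_pmf_finite[OF finite_set_run])
  finally show ?thesis by simp
qed

lemma flip_kl_1_le: "flip_kl 1 \<le> 16 * lam\<^sup>2 / 3"
proof -
  have "flip_kl 1 \<le> lam\<^sup>2 / ((1/2 + lam) * (1/2 - lam))"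
    using bernoulli_kl_le_chi2[of "1/2" "1/2 + lam"] lam
    by (simp add: flip_kl_def coin_prob_def power2_eq_square algebra_simps)
  also have "\<dots> \<le> lam\<^sup>2 / (3/16)"
  proof (rule divide_left_mono)
    show "3/16 \<le> (1/2 + lam) * (1/2 - lam)"
      using lam mult_mono[of lam "1/4" lam "1/4"] by (simp add: algebra_simps)
  qed (use lam in auto)
  finally show ?thesis by simp
qed

lemma flip_kl_2_le: "flip_kl 2 \<le> 2 * \<epsilon>\<^sup>2 / \<delta>"
proof -
  have "flip_kl 2 \<le> \<epsilon>\<^sup>2 / ((\<delta> + \<epsilon>) * (1 - (\<delta> + \<epsilon>)))"
    using bernoulli_kl_le_chi2[of \<delta> "\<delta> + \<epsilon>"] \<delta> \<epsilon>
    by (simp add: flip_kl_def coin_prob_def power2_eq_square)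
  also have "\<dots> \<le> \<epsilon>\<^sup>2 / (\<delta> / 2)"
  proof (rule divide_left_mono)
    show "\<delta> / 2 \<le> (\<delta> + \<epsilon>) * (1 - (\<delta> + \<epsilon>))"
      using \<delta> \<epsilon> mult_mono[of \<delta> "\<delta> + \<epsilon>" "1/2" "1 - (\<delta> + \<epsilon>)"] by simp
  qed (use \<delta> \<epsilon> in auto)
  finally show ?thesis by (simp add: field_simps)
qed

lemma divergence_budget:
  assumes "0 < H" "\<epsilon> = 1/20 * sqrt (real Q * \<delta> / real H)"
  shows "flip_kl 1 * (real Q / (4 * 40 * lam\<^sup>2)) + flip_kl 2 * real H \<le> 23 * real Q / 600"
proof -
  have "\<epsilon>\<^sup>2 = (1/20)\<^sup>2 * (sqrt (real Q * \<delta> / real H))\<^sup>2"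
    unfolding assms(2) by (rule power_mult_distrib)
  also have "\<dots> = real Q * \<delta> / (400 * real H)"
    using \<delta> by (simp add: power2_eq_square)
  finally have "\<epsilon>\<^sup>2 = real Q * \<delta> / (400 * real H)" .
  then have "16 * lam\<^sup>2 / 3 * (real Q / (4 * 40 * lam\<^sup>2)) + 2 * \<epsilon>\<^sup>2 / \<delta> * real H = 23 * real Q / 600"
    using \<open>0 < H\<close> lam \<delta> by (simp add: field_simps)
  moreover have "flip_kl 1 * (real Q / (4 * 40 * lam\<^sup>2)) \<le> 16 * lam\<^sup>2 / 3 * (real Q / (4 * 40 * lam\<^sup>2))"
    "flip_kl 2 * real H \<le> 2 * \<epsilon>\<^sup>2 / \<delta> * real H"
    using flip_kl_1_le flip_kl_2_le by (intro mult_right_mono; simp)+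
  ultimately show ?thesis by linarith
qed

end

theorem corollary3:
  fixes Q H :: nat and \<delta> lam \<epsilon> :: real and alg :: algorithm
  assumes hQ: "Q \<ge> 12" and hH: "H > 0"
    and h\<delta>: "0 < \<delta>" "\<delta> \<le> 1/4"
    and hlam: "0 < lam" "lam \<le> 1/4"
    and h\<epsilon>: "0 < \<epsilon>" "\<epsilon> \<le> 1/4"
    and \<epsilon>_def: "\<epsilon> = 1/20 * sqrt (real Q * \<delta> / real H)"
    and alg: "valid_alg Q H alg"
    and N1_bound: "\<forall>j\<in>{1..Q}. \<forall>x\<in>set_pmf (outcome \<delta> lam \<epsilon> H alg j).
                     real (N1 (fst x)) \<le> real Q / (4 * 40 * lam^2)"
  shows "\<exists>J \<subseteq> {1..Q}. real (card J) \<ge> real Q / 6 \<and>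
           (\<forall>j\<in>J. measure_pmf.prob (outcome \<delta> lam \<epsilon> H alg j) {x. snd x = j} \<le> 1/2)"
proof -
  interpret coin_problem \<delta> lam \<epsilon> Q H alg
    using h\<delta> hlam h\<epsilon> alg by unfold_locales
  define x where "x j = measure_pmf.prob (P 0 H []) {z. snd z = j}" for j
  define y where "y j = measure_pmf.prob (P j H []) {z. snd z = j}" for j
  have "(\<Sum>j\<in>{1..Q}. x j) = measure_pmf.prob (P 0 H []) (\<Union>j\<in>{1..Q}. {z. snd z = j})"
    unfolding x_def
    by (rule measure_pmf.finite_measure_finite_Union[symmetric]) (auto simp: disjoint_family_on_def)
  then have x_sum: "(\<Sum>j\<in>{1..Q}. x j) \<le> 1" by simp
  have "real (N1 (fst z)) \<le> real Q / (4 * 40 * lam\<^sup>2)" if "z \<in> set_pmf (P 0 H [])" for z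
    using N1_bound hQ that set_run_eq[of 0 H "[]" 1] by (auto simp: outcome_def)
  then have "(\<Sum>j\<in>{1..Q}. measure_pmf.expectation (P 0 H []) (\<lambda>z. history_kl j (fst z)))
      \<le> flip_kl 1 * (real Q / (4 * 40 * lam\<^sup>2)) + flip_kl 2 * H"
    by (rule expected_history_kl_le)
  moreover have "(\<Sum>j\<in>{1..Q}. bernoulli_kl (x j) (y j))
      \<le> (\<Sum>j\<in>{1..Q}. measure_pmf.expectation (P 0 H []) (\<lambda>z. history_kl j (fst z)))"
    unfolding x_def y_def by (intro sum_mono bernoulli_kl_prob_run_le) simp
  ultimately have "(\<Sum>j\<in>{1..Q}. bernoulli_kl (x j) (y j)) \<le> 23 * real Q / 600"
    using divergence_budget[OF hH \<epsilon>_def] by linarith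
  from card_le_half_lower_bound[OF finite_atLeastAtMost x_sum _ this]
  have "real Q - 4 - 108/11 * (23 * real Q / 600) \<le> real (card {j\<in>{1..Q}. y j \<le> 1/2})"
    by (simp add: x_def y_def bernoulli_abs_cont_prob_run)
  moreover have "real Q / 6 \<le> real Q - 4 - 108/11 * (23 * real Q / 600)"
    using hQ by linarith
  moreover have "measure_pmf.prob (outcome \<delta> lam \<epsilon> H alg j) {z. snd z = j} = y j" for j
    by (simp add: y_def outcome_def)
  ultimately show ?thesis
    by (intro exI[of _ "{j\<in>{1..Q}. y j \<le> 1/2}"]) auto
qed

end
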